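(* Let $S(\mathbf{G}(V,E),\mathbf{\Sigma})$ be a constrained switching system with $\mathbf{\Sigma}\subset\mathbb{R}^{n\times n}$, nodes $V=\{v_1,\dots,v_{|V|}\}$, and let $\mathbf{\Sigma}_{\mathbf{G}}=\{A_{(v_i,v_j,\sigma)} : (v_i,v_j,\sigma)\in E\}$ be its Kronecker lift, where $A_{(v_i,v_j,\sigma)}=(\mathbf{e}(j)\mathbf{e}(i)^\top)\otimes A_\sigma\in\mathbb{R}^{n|V|\times n|V|}$. Let $\gamma>0$. There exists a symmetric $Q_{\mathbf{G}}\succ0$ in $\mathbb{R}^{n|V|\times n|V|}$ such that $$A_{(v,w,\sigma)}^\top Q_{\mathbf{G}}A_{(v,w,\sigma)}-\gamma^2Q_{\mathbf{G}}\preceq0\quad\text{for all } (v,w,\sigma)\in E$$ if and only if $S$ has a quadratic multinorm with value at most $\gamma$.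
   Context: An automaton $\mathbf{G}(V,E)$ is a strongly connected directed graph with finite node set $V$ and finite edge set $E$ of labelled edges $(v,w,\sigma)$, $\sigma$ indexing a matrix $A_\sigma\in\mathbf{\Sigma}$; $S(\mathbf{G},\mathbf{\Sigma})$ is the switching system $x_{t+1}=A_{\sigma(t)}x_t$ whose switching sequences are label sequences of paths in $\mathbf{G}$. $\mathbf{e}(k)$ is the $k$-th canonical basis vector of $\mathbb{R}^{|V|}$ and $\otimes$ the Kronecker product. A quadratic multinorm for $S$ is a family $\{|\cdot|_v : v\in V\}$ with $|x|_v=(x^\top Q_vx)^{1/2}$ for symmetric $Q_v\succ0$; its value is $\min\{\gamma : |A_\sigma x|_w\le\gamma|x|_v\ \forall x\in\mathbb{R}^n,\ \forall(v,w,\sigma)\in E\}$ (equivalently the least $\gamma$ with $A_\sigma^\top Q_wA_\sigma\preceq\gamma^2Q_v$ for all edges). *)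

theory Defs
  imports "HOL-Analysis.Analysis"
begin

text \<open>Automaton: nodes are all elements of the finite type 'v, edges a finite set
  of labelled triples (v, w, sigma); labels index matrices via Sigma.\<close>

definition strongly_connected :: "('v \<times> 'v \<times> 's) set \<Rightarrow> bool" where
  "strongly_connected E \<longleftrightarrow>
     (\<forall>v w. (v, w) \<in> ({(a, b). \<exists>s. (a, b, s) \<in> E})\<^sup>*)"

definition automaton :: "('v::finite \<times> 'v \<times> 's) set \<Rightarrow> bool" where
  "automaton E \<longleftrightarrow> finite E \<and> strongly_connected E"

definition sym_posdef :: "real^'n^'n \<Rightarrow> bool" where
  "sym_posdef Q \<longleftrightarrow> transpose Q = Q \<and> (\<forall>x. x \<noteq> 0 \<longrightarrow> x \<bullet> (Q *v x) > 0)"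

definition neg_semidef :: "real^'n^'n \<Rightarrow> bool" where
  "neg_semidef M \<longleftrightarrow> (\<forall>x. x \<bullet> (M *v x) \<le> 0)"

definition kron :: "real^'a^'b \<Rightarrow> real^'c^'d \<Rightarrow> real^('a \<times> 'c)^('b \<times> 'd)" where
  "kron X A = (\<chi> i j. X $ fst i $ fst j * A $ snd i $ snd j)"

definition outer :: "real^'a \<Rightarrow> real^'b \<Rightarrow> real^'b^'a" where
  "outer u v = (\<chi> i j. u $ i * v $ j)"

definition basis_e :: "'v::finite \<Rightarrow> real^'v" where
  "basis_e k = axis k 1"

definition lift_matrix :: "('s \<Rightarrow> real^'n^'n) \<Rightarrow> ('v::finite \<times> 'v \<times> 's)
    \<Rightarrow> real^('v \<times> 'n)^('v \<times> 'n)" where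
  "lift_matrix Mats e = (case e of (v, w, s) \<Rightarrow> kron (outer (basis_e w) (basis_e v)) (Mats s))"

definition qnorm :: "real^'n^'n \<Rightarrow> real^'n \<Rightarrow> real" where
  "qnorm Q x = sqrt (x \<bullet> (Q *v x))"

definition is_quadratic_multinorm :: "('v \<Rightarrow> real^'n^'n) \<Rightarrow> bool" where
  "is_quadratic_multinorm Q \<longleftrightarrow> (\<forall>v. sym_posdef (Q v))"

definition multinorm_value ::
  "('v \<times> 'v \<times> 's) set \<Rightarrow> ('s \<Rightarrow> real^'n^'n) \<Rightarrow> ('v \<Rightarrow> real^'n^'n) \<Rightarrow> real" where
  "multinorm_value E Mats Q =
     Inf {g. g \<ge> 0 \<and> (\<forall>(v, w, s) \<in> E. \<forall>x.
            qnorm (Q w) (Mats s *v x) \<le> g * qnorm (Q v) x)}"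

end

theory Submission
  imports Defs
begin

text \<open>A vector of the lifted space splits into blocks x_v, one per node, and the lift of
  the edge (v, w, s) maps x to the vector whose only nonzero block is A_s x_v, placed at w.
  Hence the lifted inequality for Q_G only involves the diagonal blocks of Q_G through
  (A_s x_v)' Q_G[w,w] (A_s x_v) \<le> \<gamma>^2 x' Q_G x.  Testing it on vectors supported on a single block
  turns the diagonal blocks of Q_G into a multinorm of value at most \<gamma>; conversely the
  block-diagonal matrix built from a multinorm satisfies it, since x' Q_G x then dominates
  each x_v' Q_v x_v.  The value of a multinorm over a finite edge set is an attained infimum,
  so "value \<le> \<gamma>" is exactly the family of inequalities A_s' Q_w A_s \<preceq> \<gamma>^2 Q_v.\<close>

abbreviation quad_form :: "real^'n^'n \<Rightarrow> real^'n \<Rightarrow> real" where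
  "quad_form Q x \<equiv> x \<bullet> (Q *v x)"

definition vec_block :: "real^('v::finite \<times> 'n::finite) \<Rightarrow> 'v \<Rightarrow> real^'n" where
  "vec_block x a = (\<chi> i. x $ (a, i))"

definition vec_of_block :: "'v::finite \<Rightarrow> real^'n::finite \<Rightarrow> real^('v \<times> 'n)" where
  "vec_of_block w y = (\<chi> p. if fst p = w then y $ snd p else 0)"

definition diag_block :: "real^('v::finite \<times> 'n::finite)^('v \<times> 'n) \<Rightarrow> 'v \<Rightarrow> real^'n^'n" where
  "diag_block Q v = (\<chi> i j. Q $ (v, i) $ (v, j))"

definition block_diag :: "('v::finite \<Rightarrow> real^'n::finite^'n) \<Rightarrow> real^('v \<times> 'n)^('v \<times> 'n)" where
  "block_diag Q = (\<chi> p q. if fst p = fst q then Q (fst p) $ snd p $ snd q else 0)"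

lemma sum_UNIV_prod_swap: "(\<Sum>p\<in>UNIV. f p) = (\<Sum>i\<in>UNIV. \<Sum>a\<in>UNIV. (f (a, i) :: real))"
  by (subst sum.swap) (simp add: sum.cartesian_product)

lemma inner_eq_sum_vec_block:
  "(x::real^('v::finite \<times> 'n::finite)) \<bullet> y = (\<Sum>a\<in>UNIV. vec_block x a \<bullet> vec_block y a)"
  by (simp add: inner_vec_def vec_block_def sum.cartesian_product)

lemma vec_block_vec_of_block: "vec_block (vec_of_block w y) a = (if a = w then y else 0)"
  by (simp add: vec_block_def vec_of_block_def vec_eq_iff)

lemma vec_of_block_eq_0_iff: "vec_of_block w y = 0 \<longleftrightarrow> y = 0"
proof
  assume "vec_of_block w y = 0"
  then show "y = 0" using vec_block_vec_of_block[of w y w] by (simp add: vec_block_def vec_eq_iff)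
qed (simp add: vec_of_block_def vec_eq_iff)

lemma lift_matrix_mult:
  "lift_matrix A (v, w, s) *v x = vec_of_block w (A s *v vec_block x v)"
  by (simp add: vec_eq_iff matrix_vector_mult_def sum_UNIV_prod_swap lift_matrix_def kron_def outer_def
      basis_e_def axis_def vec_of_block_def vec_block_def if_distrib[of "\<lambda>t. t * _"]
      cong: if_cong)

lemma quad_form_congruence_diff:
  "x \<bullet> ((transpose L ** Q ** L - c *\<^sub>R Q) *v x) = quad_form Q (L *v x) - c * quad_form Q x"
proof -
  have "x \<bullet> ((transpose L ** Q ** L) *v x) = x \<bullet> (transpose L *v (Q *v (L *v x)))"
    by (simp add: matrix_vector_mul_assoc matrix_mul_assoc)
  also have "\<dots> = quad_form Q (L *v x)"
    by (metis dot_lmul_matrix vector_transpose_matrix)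
  finally show ?thesis
    by (simp add: matrix_vector_mult_diff_rdistrib inner_diff_right
        scaleR_matrix_vector_assoc[symmetric])
qed

lemma quad_form_vec_of_block: "quad_form Q (vec_of_block v y) = quad_form (diag_block Q v) y"
proof -
  have "vec_block (Q *v vec_of_block v y) v = diag_block Q v *v y"
    by (simp add: vec_eq_iff vec_block_def vec_of_block_def diag_block_def matrix_vector_mult_def
        sum_UNIV_prod_swap if_distrib[of "\<lambda>t. _ * t"] cong: if_cong)
  then show ?thesis
    by (simp add: inner_eq_sum_vec_block[of "vec_of_block v y"] vec_block_vec_of_block
        if_distrib[of "\<lambda>t. t \<bullet> _"] cong: if_cong)
qed

lemma vec_block_block_diag_mult: "vec_block (block_diag Q *v x) a = Q a *v vec_block x a"
  by (simp add: vec_eq_iff vec_block_def matrix_vector_mult_def block_diag_def sum_UNIV_prod_swap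
      if_distrib[of "\<lambda>t. t * _"] cong: if_cong)

lemma quad_form_block_diag: "quad_form (block_diag Q) x = (\<Sum>a\<in>UNIV. quad_form (Q a) (vec_block x a))"
  by (simp add: inner_eq_sum_vec_block vec_block_block_diag_mult)

lemma diag_block_block_diag [simp]: "diag_block (block_diag Q) v = Q v"
  by (simp add: diag_block_def block_diag_def vec_eq_iff)

lemma sym_posdef_quad_form_nonneg: "sym_posdef Q \<Longrightarrow> 0 \<le> quad_form Q x"
  unfolding sym_posdef_def by (cases "x = 0") (auto intro: less_imp_le)

lemma sym_posdef_sym: "sym_posdef Q \<Longrightarrow> Q $ i $ j = Q $ j $ i"
  unfolding sym_posdef_def by (metis transpose_def vec_lambda_beta)

lemma sym_posdef_diag_block:
  assumes "sym_posdef Q"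
  shows "sym_posdef (diag_block Q v)"
  unfolding sym_posdef_def
proof (intro conjI allI impI)
  show "transpose (diag_block Q v) = diag_block Q v"
    using assms by (simp add: vec_eq_iff transpose_def diag_block_def sym_posdef_sym)
  fix y :: "real^'b" assume "y \<noteq> 0"
  then show "quad_form (diag_block Q v) y > 0"
    using assms by (simp add: sym_posdef_def vec_of_block_eq_0_iff flip: quad_form_vec_of_block)
qed

lemma sym_posdef_block_diag:
  assumes "\<And>v. sym_posdef (Q v)"
  shows "sym_posdef (block_diag Q)"
  unfolding sym_posdef_def
proof (intro conjI allI impI)
  show "transpose (block_diag Q) = block_diag Q"
    using assms by (simp add: vec_eq_iff transpose_def block_diag_def sym_posdef_sym)
  fix x :: "real^('a \<times> 'b)" assume "x \<noteq> 0"
  then obtain a i where "x $ (a, i) \<noteq> 0" by (auto simp: vec_eq_iff)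
  then have "vec_block x a \<noteq> 0" by (auto simp: vec_block_def vec_eq_iff)
  then show "quad_form (block_diag Q) x > 0" unfolding quad_form_block_diag
    using assms by (intro sum_pos2[where i=a]) (auto simp: sym_posdef_def sym_posdef_quad_form_nonneg)
qed

lemma sym_posdef_quad_form_lower_bound:
  fixes Q :: "real^'n::finite^'n"
  assumes "sym_posdef Q"
  shows "\<exists>m>0. \<forall>x. m * (norm x)\<^sup>2 \<le> quad_form Q x"
proof -
  have "continuous_on (sphere 0 1) (quad_form Q)"
    by (intro continuous_intros linear_continuous_on matrix_vector_mul_bounded_linear)
  moreover have "sphere (0::real^'n) 1 \<noteq> {}"
    using norm_axis_1[of undefined] by (metis dist_0_norm mem_sphere empty_iff)
  ultimately obtain u where u: "u \<in> sphere 0 1" "\<forall>y \<in> sphere 0 1. quad_form Q u \<le> quad_form Q y"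
    using continuous_attains_inf[OF compact_sphere] by blast
  have "quad_form Q u * (norm x)\<^sup>2 \<le> quad_form Q x" for x
  proof (cases "x = 0")
    case False
    have "quad_form Q u \<le> quad_form Q ((1 / norm x) *\<^sub>R x)"
      using False by (intro u(2)[rule_format]) simp
    also have "\<dots> = quad_form Q x / (norm x)\<^sup>2"
      by (simp add: matrix_vector_mult_scaleR power2_eq_square divide_inverse)
    finally show ?thesis using False by (simp add: pos_le_divide_eq)
  qed simp
  moreover have "u \<noteq> 0"
    using u(1) by auto
  then have "quad_form Q u > 0"
    using assms by (simp add: sym_posdef_def)
  ultimately show ?thesis by blast
qed

lemma quad_form_upper_bound: "\<exists>K\<ge>0. \<forall>x. quad_form (Q::real^'n::finite^'n) x \<le> K * (norm x)\<^sup>2"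
proof -
  obtain K where K: "K > 0" "\<And>x. norm (Q *v x) \<le> norm x * K"
    using bounded_linear.pos_bounded[OF matrix_vector_mul_bounded_linear[of Q]] by blast
  have "quad_form Q x \<le> K * (norm x)\<^sup>2" for x
  proof -
    have "quad_form Q x \<le> norm x * norm (Q *v x)" by (rule norm_cauchy_schwarz)
    also have "\<dots> \<le> norm x * (norm x * K)" by (intro mult_left_mono K(2)) simp
    finally show ?thesis by (simp add: power2_eq_square mult_ac)
  qed
  then show ?thesis using K(1) by (intro exI[of _ K]) auto
qed

lemma qnorm_matrix_vector_bound:
  fixes Qv Qw A :: "real^'n::finite^'n"
  assumes "sym_posdef Qv"
  shows "\<exists>g\<ge>0. \<forall>x. qnorm Qw (A *v x) \<le> g * qnorm Qv x"
proof -
  obtain m where m: "m > 0" "\<And>x. m * (norm x)\<^sup>2 \<le> quad_form Qv x"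
    using sym_posdef_quad_form_lower_bound[OF assms] by blast
  obtain K where K: "K \<ge> 0" "\<And>x. quad_form Qw x \<le> K * (norm x)\<^sup>2"
    using quad_form_upper_bound by blast
  obtain B where B: "B > 0" "\<And>x. norm (A *v x) \<le> norm x * B"
    using bounded_linear.pos_bounded[OF matrix_vector_mul_bounded_linear[of A]] by blast
  define g where "g = sqrt K * B / sqrt m"
  have g: "g \<ge> 0" using K B m by (simp add: g_def)
  have "qnorm Qw (A *v x) \<le> g * qnorm Qv x" for x
  proof -
    have "qnorm Qw (A *v x) \<le> sqrt (K * (norm (A *v x))\<^sup>2)"
      unfolding qnorm_def by (intro real_sqrt_le_mono K(2))
    also have "\<dots> = sqrt K * norm (A *v x)" by (simp add: real_sqrt_mult)
    also have "\<dots> \<le> sqrt K * (norm x * B)" using K(1) by (intro mult_left_mono B(2)) simp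
    also have "\<dots> = g * sqrt (m * (norm x)\<^sup>2)" using m by (simp add: g_def real_sqrt_mult)
    also have "\<dots> \<le> g * qnorm Qv x"
      unfolding qnorm_def by (intro mult_left_mono real_sqrt_le_mono m(2) g)
    finally show ?thesis .
  qed
  then show ?thesis using g by blast
qed

lemma qnorm_le_iff_quad_form:
  assumes "0 \<le> \<gamma>" "0 \<le> quad_form Qv x"
  shows "qnorm Qw y \<le> \<gamma> * qnorm Qv x \<longleftrightarrow> quad_form Qw y \<le> \<gamma>\<^sup>2 * quad_form Qv x"
proof -
  have "\<gamma> * qnorm Qv x = sqrt (\<gamma>\<^sup>2 * quad_form Qv x)"
    using assms(1) by (simp add: qnorm_def real_sqrt_mult)
  then show ?thesis by (simp add: qnorm_def)
qed

lemma multinorm_value_le_iff: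
  assumes "finite E" "is_quadratic_multinorm Q" "0 \<le> \<gamma>"
  shows "multinorm_value E Mats Q \<le> \<gamma> \<longleftrightarrow>
    (\<forall>(v, w, s) \<in> E. \<forall>x. qnorm (Q w) (Mats s *v x) \<le> \<gamma> * qnorm (Q v) x)"
    (is "_ \<longleftrightarrow> ?bound \<gamma>")
proof -
  have posdef: "sym_posdef (Q v)" for v
    using assms(2) by (simp add: is_quadratic_multinorm_def)
  have qnorm_nonneg: "0 \<le> qnorm (Q v) x" for v x
    by (simp add: qnorm_def sym_posdef_quad_form_nonneg[OF posdef])
  define S where "S = {g. g \<ge> 0 \<and> ?bound g}"
  have bound_mono: "?bound h" if "?bound g" "g \<le> h" for g h
    using that qnorm_nonneg by (fastforce intro: order_trans mult_right_mono)
  have "\<forall>e. \<exists>g\<ge>0. \<forall>x. qnorm (Q (fst (snd e))) (Mats (snd (snd e)) *v x) \<le> g * qnorm (Q (fst e)) x"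
    using qnorm_matrix_vector_bound[OF posdef] by blast
  then obtain G where G: "\<And>e. 0 \<le> G e \<and> (\<forall>x. qnorm (Q (fst (snd e))) (Mats (snd (snd e)) *v x)
                                              \<le> G e * qnorm (Q (fst e)) x)"
    by metis
  have "sum G E \<in> S"
    unfolding S_def
  proof (safe)
    show "0 \<le> sum G E" using G by (intro sum_nonneg) blast
    fix v w s x assume e: "(v, w, s) \<in> E"
    have "qnorm (Q w) (Mats s *v x) \<le> G (v, w, s) * qnorm (Q v) x" using G[of "(v, w, s)"] by simp
    also have "\<dots> \<le> sum G E * qnorm (Q v) x"
      using G assms(1) e by (intro mult_right_mono member_le_sum qnorm_nonneg) blast+
    finally show "qnorm (Q w) (Mats s *v x) \<le> sum G E * qnorm (Q v) x" .
  qed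
  then have "S \<noteq> {}" by blast
  have "?bound (Inf S)"
  proof (clarify)
    fix v w s x assume e: "(v, w, s) \<in> E"
    have le: "qnorm (Q w) (Mats s *v x) \<le> g * qnorm (Q v) x" if "g \<in> S" for g
      using that e by (auto simp: S_def)
    show "qnorm (Q w) (Mats s *v x) \<le> Inf S * qnorm (Q v) x"
    proof (cases "qnorm (Q v) x = 0")
      case True then show ?thesis using le[OF \<open>sum G E \<in> S\<close>] by simp
    next
      case False
      then have "qnorm (Q w) (Mats s *v x) / qnorm (Q v) x \<le> Inf S"
        using le qnorm_nonneg[of v x] by (intro cInf_greatest[OF \<open>S \<noteq> {}\<close>]) (simp add: divide_le_eq)
      then show ?thesis using False qnorm_nonneg[of v x] by (simp add: divide_le_eq)
    qed
  qed
  have value_eq: "multinorm_value E Mats Q = Inf S"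
    by (simp add: multinorm_value_def S_def)
  show ?thesis
  proof
    assume "multinorm_value E Mats Q \<le> \<gamma>"
    then show "?bound \<gamma>" using bound_mono[OF \<open>?bound (Inf S)\<close>] by (simp add: value_eq)
  next
    assume "?bound \<gamma>"
    then have "\<gamma> \<in> S" using assms(3) by (simp add: S_def)
    moreover have "bdd_below S" by (auto simp: S_def intro: bdd_belowI[of _ 0])
    ultimately show "multinorm_value E Mats Q \<le> \<gamma>" by (simp add: value_eq cInf_lower)
  qed
qed

lemma multinorm_value_le_iff_quad_form:
  assumes "finite E" "is_quadratic_multinorm Q" "0 \<le> \<gamma>"
  shows "multinorm_value E Mats Q \<le> \<gamma> \<longleftrightarrow>
    (\<forall>(v, w, s) \<in> E. \<forall>x. quad_form (Q w) (Mats s *v x) \<le> \<gamma>\<^sup>2 * quad_form (Q v) x)"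
  using assms
  by (simp add: multinorm_value_le_iff qnorm_le_iff_quad_form sym_posdef_quad_form_nonneg
      is_quadratic_multinorm_def)

lemma neg_semidef_lift_iff:
  "neg_semidef (transpose (lift_matrix A (v, w, s)) ** Q ** lift_matrix A (v, w, s) - c *\<^sub>R Q)
   \<longleftrightarrow> (\<forall>x. quad_form (diag_block Q w) (A s *v vec_block x v) \<le> c * quad_form Q x)"
  by (simp add: neg_semidef_def quad_form_congruence_diff lift_matrix_mult quad_form_vec_of_block)

lemma neg_semidef_lift_diag_block:
  assumes "neg_semidef (transpose (lift_matrix A (v, w, s)) ** Q ** lift_matrix A (v, w, s) - c *\<^sub>R Q)"
  shows "quad_form (diag_block Q w) (A s *v y) \<le> c * quad_form (diag_block Q v) y"
  using assms[unfolded neg_semidef_lift_iff, rule_format, of "vec_of_block v y"]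
  by (simp add: vec_block_vec_of_block quad_form_vec_of_block)

lemma neg_semidef_lift_block_diag:
  assumes "\<And>u. sym_posdef (Q u)" "0 \<le> c"
    and "\<And>y. quad_form (Q w) (A s *v y) \<le> c * quad_form (Q v) y"
  shows "neg_semidef (transpose (lift_matrix A (v, w, s)) ** block_diag Q ** lift_matrix A (v, w, s)
                        - c *\<^sub>R block_diag Q)"
  unfolding neg_semidef_lift_iff diag_block_block_diag
proof
  fix x
  have "quad_form (Q w) (A s *v vec_block x v) \<le> c * quad_form (Q v) (vec_block x v)"
    by (rule assms(3))
  also have "\<dots> \<le> c * quad_form (block_diag Q) x"
    unfolding quad_form_block_diag
    using assms(1,2) by (intro mult_left_mono member_le_sum sym_posdef_quad_form_nonneg) auto
  finally show "quad_form (Q w) (A s *v vec_block x v) \<le> c * quad_form (block_diag Q) x" .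
qed

theorem proposition3p14:
  fixes E :: "('v::finite \<times> 'v \<times> 's) set"
    and Mats :: "'s \<Rightarrow> real^'n^'n"
    and \<gamma> :: real
  assumes "automaton E"
    and "\<gamma> > 0"
  shows "(\<exists>QG :: real^('v \<times> 'n)^('v \<times> 'n). sym_posdef QG \<and>
            (\<forall>e \<in> E. neg_semidef
               (transpose (lift_matrix Mats e) ** QG ** lift_matrix Mats e - \<gamma>\<^sup>2 *\<^sub>R QG)))
     \<longleftrightarrow> (\<exists>Q :: 'v \<Rightarrow> real^'n^'n. is_quadratic_multinorm Q \<and>
            multinorm_value E Mats Q \<le> \<gamma>)"
proof -
  have "finite E" using assms(1) by (simp add: automaton_def)
  note value_iff = multinorm_value_le_iff_quad_form[OF this _ less_imp_le[OF assms(2)]]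
  show ?thesis
  proof (intro iffI; elim exE conjE)
    fix QG :: "real^('v \<times> 'n)^('v \<times> 'n)"
    assume "sym_posdef QG" and lifted: "\<forall>e \<in> E. neg_semidef
               (transpose (lift_matrix Mats e) ** QG ** lift_matrix Mats e - \<gamma>\<^sup>2 *\<^sub>R QG)"
    then have mn: "is_quadratic_multinorm (diag_block QG)"
      by (simp add: is_quadratic_multinorm_def sym_posdef_diag_block)
    moreover have "multinorm_value E Mats (diag_block QG) \<le> \<gamma>"
      unfolding value_iff[OF mn] using lifted by (blast intro: neg_semidef_lift_diag_block)
    ultimately show "\<exists>Q. is_quadratic_multinorm Q \<and> multinorm_value E Mats Q \<le> \<gamma>" by blast
  next
    fix Q :: "'v \<Rightarrow> real^'n^'n"
    assume mn: "is_quadratic_multinorm Q" and "multinorm_value E Mats Q \<le> \<gamma>"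
    then have posdef: "\<And>v. sym_posdef (Q v)" and bound: "\<forall>(v, w, s) \<in> E. \<forall>y.
        quad_form (Q w) (Mats s *v y) \<le> \<gamma>\<^sup>2 * quad_form (Q v) y"
      by (simp_all add: is_quadratic_multinorm_def value_iff[OF mn])
    have "\<forall>e \<in> E. neg_semidef
            (transpose (lift_matrix Mats e) ** block_diag Q ** lift_matrix Mats e - \<gamma>\<^sup>2 *\<^sub>R block_diag Q)"
      using bound by (fastforce intro: neg_semidef_lift_block_diag posdef)
    with sym_posdef_block_diag[OF posdef]
    show "\<exists>QG. sym_posdef QG \<and> (\<forall>e \<in> E. neg_semidef
            (transpose (lift_matrix Mats e) ** QG ** lift_matrix Mats e - \<gamma>\<^sup>2 *\<^sub>R QG))"
      by (intro exI[of _ "block_diag Q"]) auto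
  qed
qed

end
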